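(* Let $M\ge 2$ and consider $M$ bosonic modes $a_1,\dots,a_M$. Define the centre-of-mass mode $a_+ \coloneqq \frac{1}{\sqrt{M}}\sum_{m=1}^M a_m$, and the operators $\Pi_{+M}\coloneqq e^{i\pi a_+^\dagger a_+}$ and $\Pi_{-M}\coloneqq e^{i\pi(\sum_{m=1}^M a_m^\dagger a_m - a_+^\dagger a_+)} = \Pi\,\Pi_{+M}$, where $\Pi = e^{-i\pi\sum_{m=1}^M a_m^\dagger a_m}$. Then $\Pi_{+M}$ and $\Pi_{-M}$ are multiport beamsplitters, and for every $m\in\{1,\dots,M\}$ they act on the local modes as $$\Pi_{\pm M}\, a_m\, \Pi_{\pm M} = \pm\left(1-\frac{2}{M}\right)a_m \mp \frac{2}{M}\sum_{m'\neq m} a_{m'}.$$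
   Context: The modes satisfy the canonical commutation relations $[a_m,a_{m'}]=0$, $[a_m,a_{m'}^\dagger]=\delta_{m,m'}\mathbb{1}$. Writing $\vec{a}=(a_1,\dots,a_M)^T$, a multiport beamsplitter is a unitary of the form $e^{\vec{a}^\dagger(\log\mathcal{U})\vec{a}}$ for an $M\times M$ unitary matrix $\mathcal{U}$; it acts as $e^{-\vec{a}^\dagger(\log\mathcal{U})\vec{a}}\,\vec{a}\,e^{\vec{a}^\dagger(\log\mathcal{U})\vec{a}}=\mathcal{U}\vec{a}$. *)

theory Defs
  imports "HOL-Analysis.Analysis"
begin

text \<open>Single-mode (first-quantised) level: an operator e^{a^dagger L a} is determined by the
  M x M matrix L; its mode transformation is the matrix exponential exp L.\<close>

primrec matpow :: "complex^'n^'n \<Rightarrow> nat \<Rightarrow> complex^'n^'n" where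
  "matpow A 0 = mat 1"
| "matpow A (Suc k) = A ** matpow A k"

definition mexp :: "complex^'n^'n \<Rightarrow> complex^'n^'n" where
  "mexp A = (\<Sum>k. (1 / fact k) *\<^sub>R matpow A k)"

definition adjoint_mat :: "complex^'n^'n \<Rightarrow> complex^'n^'n" where
  "adjoint_mat A = (\<chi> i j. cnj (A $ j $ i))"

definition unitary_mat :: "complex^'n^'n \<Rightarrow> bool" where
  "unitary_mat U \<longleftrightarrow> U ** adjoint_mat U = mat 1 \<and> adjoint_mat U ** U = mat 1"

text \<open>Centre-of-mass projector: a_+^dagger a_+ = a^dagger P a with P_{mm'} = 1/M.\<close>
definition com_proj :: "complex^'n^'n" where
  "com_proj = (\<chi> i j. 1 / of_nat CARD('n))"

text \<open>Generators: Pi_{+M} = e^{a^dagger G_+ a}, Pi_{-M} = e^{a^dagger G_- a}, Pi = e^{a^dagger G_Pi a}.\<close>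
definition gen_plus :: "complex^'n^'n" where
  "gen_plus = (\<chi> i j. \<i> * of_real pi * com_proj $ i $ j)"

definition gen_minus :: "complex^'n^'n" where
  "gen_minus = (\<chi> i j. \<i> * of_real pi * (mat 1 - com_proj) $ i $ j)"

definition gen_parity :: "complex^'n^'n" where
  "gen_parity = (\<chi> i j. - \<i> * of_real pi * mat 1 $ i $ j)"

end

theory Submission
  imports Defs
begin

text \<open>The matrix P with all entries 1/M is the orthogonal projection onto the centre-of-mass
  direction, and so is its complement I - P onto the relative modes. For a Hermitian
  idempotent Q the exponential series collapses to e^{cQ} = I - Q + e^c Q, so
  e^{i\<pi>Q} = I - 2Q is a reflection: a Hermitian involution, hence unitary, and
  e^{2i\<pi>Q} = I. Since e^{-i\<pi>I} = -I, the reflection in I - P is the product of the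
  parity with the reflection in P.\<close>

lemma matrix_diff_rdistrib:
  fixes A B C :: "'a::ring_1^'n^'n"
  shows "(A - B) ** C = A ** C - B ** C"
  by (simp add: matrix_matrix_mult_def vec_eq_iff left_diff_distrib sum_subtractf)

lemma matrix_diff_ldistrib:
  fixes A B C :: "'a::ring_1^'n^'n"
  shows "A ** (B - C) = A ** B - A ** C"
  by (simp add: matrix_matrix_mult_def vec_eq_iff right_diff_distrib sum_subtractf)

lemma adjoint_mat_diff: "adjoint_mat (A - B) = adjoint_mat A - adjoint_mat B"
  by (simp add: adjoint_mat_def vec_eq_iff)

lemma adjoint_mat_scaleR: "adjoint_mat (r *\<^sub>R A) = r *\<^sub>R adjoint_mat A"
  by (simp add: adjoint_mat_def vec_eq_iff)

lemma adjoint_mat_1: "adjoint_mat (mat 1) = mat 1"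
  by (simp add: adjoint_mat_def mat_def vec_eq_iff)

lemma idempotent_mat_complement:
  fixes Q :: "'a::ring_1^'n^'n"
  assumes "Q ** Q = Q"
  shows "(mat 1 - Q) ** (mat 1 - Q) = mat 1 - Q"
  by (simp add: matrix_diff_ldistrib matrix_diff_rdistrib assms)

lemma reflection_mat_involution:
  fixes Q :: "complex^'n^'n"
  assumes "Q ** Q = Q"
  shows "(mat 1 - 2 *\<^sub>R Q) ** (mat 1 - 2 *\<^sub>R Q) = mat 1"
proof -
  have "(2 *\<^sub>R Q) ** (2 *\<^sub>R Q) = 4 *\<^sub>R Q"
    by (simp add: matrix_scalar_ac scalar_matrix_assoc[symmetric] assms)
  then show ?thesis
    by (simp add: matrix_diff_ldistrib matrix_diff_rdistrib)
qed

lemma unitary_mat_reflection: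
  fixes Q :: "complex^'n^'n"
  assumes "Q ** Q = Q" and "adjoint_mat Q = Q"
  shows "unitary_mat (mat 1 - 2 *\<^sub>R Q)"
  unfolding unitary_mat_def
  by (simp add: adjoint_mat_diff adjoint_mat_scaleR adjoint_mat_1 assms
      reflection_mat_involution)

lemma matpow_scaled_idempotent:
  fixes Q :: "complex^'n^'n"
  assumes "Q ** Q = Q"
  shows "matpow (\<chi> i j. c * Q$i$j) (Suc k) = (\<chi> i j. c ^ Suc k * Q$i$j)"
proof (induction k)
  case 0
  show ?case by simp
next
  case (Suc k)
  have idem: "(\<Sum>l\<in>UNIV. Q$i$l * Q$l$j) = Q$i$j" for i j
    using assms by (simp add: matrix_matrix_mult_def vec_eq_iff)
  have "matpow (\<chi> i j. c * Q$i$j) (Suc (Suc k))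
      = (\<chi> i j. c * Q$i$j) ** (\<chi> i j. c ^ Suc k * Q$i$j)"
    using Suc by simp
  also have "\<dots> = (\<chi> i j. c ^ Suc (Suc k) * (\<Sum>l\<in>UNIV. Q$i$l * Q$l$j))"
    by (simp add: matrix_matrix_mult_def sum_distrib_left mult_ac)
  finally show ?case by (simp only: idem)
qed

lemma mexp_scaled_idempotent:
  fixes Q :: "complex^'n^'n"
  assumes "Q ** Q = Q"
  shows "mexp (\<chi> i j. c * Q$i$j) = mat 1 - Q + (\<chi> i j. exp c * Q$i$j)"
proof -
  define L where "L z = (\<chi> i j. z * Q$i$j)" for z :: complex
  have "bounded_linear L"
    unfolding L_def
    by (intro linear_conv_bounded_linear[THEN iffD1] linearI)
      (simp_all add: vec_eq_iff distrib_right)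
  then have exp_part: "(\<lambda>k. L (c ^ k /\<^sub>R fact k)) sums L (exp c)"
    by (rule bounded_linear.sums[OF _ exp_converges])
  have const_part: "(\<lambda>k. if k = 0 then mat 1 - Q else 0) sums (mat 1 - Q)"
    using sums_single[of 0 "\<lambda>_. mat 1 - Q"] by simp
  have "(1 / fact k) *\<^sub>R matpow (\<chi> i j. c * Q$i$j) k
      = L (c ^ k /\<^sub>R fact k) + (if k = 0 then mat 1 - Q else 0)" for k
    by (cases k) (simp_all add: L_def vec_eq_iff matpow_scaled_idempotent[OF assms]
        inverse_eq_divide del: matpow.simps(2))
  with sums_add[OF exp_part const_part]
  have "(\<lambda>k. (1 / fact k) *\<^sub>R matpow (\<chi> i j. c * Q$i$j) k)
      sums (L (exp c) + (mat 1 - Q))"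
    by simp
  then show ?thesis
    unfolding mexp_def L_def by (simp add: sums_iff)
qed

corollary mexp_scaled_idempotent_reflection:
  fixes Q :: "complex^'n^'n"
  assumes "Q ** Q = Q" and "exp c = -1"
  shows "mexp (\<chi> i j. c * Q$i$j) = mat 1 - 2 *\<^sub>R Q"
  using mexp_scaled_idempotent[OF assms(1), of c] assms(2)
  by (simp add: vec_eq_iff scaleR_conv_of_real)

corollary mexp_scaled_idempotent_eq_1:
  fixes Q :: "complex^'n^'n"
  assumes "Q ** Q = Q" and "exp c = 1"
  shows "mexp (\<chi> i j. c * Q$i$j) = mat 1"
  using mexp_scaled_idempotent[OF assms(1), of c] assms(2) by (simp add: vec_eq_iff)

lemma com_proj_idempotent: "(com_proj :: complex^'n^'n) ** com_proj = com_proj"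
proof -
  have "(\<Sum>l\<in>(UNIV::'n set). 1 / of_nat CARD('n) * (1 / of_nat CARD('n)))
      = (1 / of_nat CARD('n) :: complex)"
    by (simp add: field_simps)
  then show ?thesis
    by (simp add: matrix_matrix_mult_def com_proj_def vec_eq_iff)
qed

lemma adjoint_com_proj: "adjoint_mat (com_proj :: complex^'n^'n) = com_proj"
  by (simp add: adjoint_mat_def com_proj_def vec_eq_iff)

lemma com_proj_complement_idempotent:
  "(mat 1 - com_proj :: complex^'n^'n) ** (mat 1 - com_proj) = mat 1 - com_proj"
  by (rule idempotent_mat_complement[OF com_proj_idempotent])

lemma adjoint_com_proj_complement:
  "adjoint_mat (mat 1 - com_proj :: complex^'n^'n) = mat 1 - com_proj"
  by (simp add: adjoint_mat_diff adjoint_mat_1 adjoint_com_proj)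

lemma mexp_gen_plus: "mexp (gen_plus :: complex^'n^'n) = mat 1 - 2 *\<^sub>R com_proj"
  using mexp_scaled_idempotent_reflection[OF com_proj_idempotent exp_pi_i']
  by (simp add: gen_plus_def mult.assoc)

lemma mexp_gen_minus: "mexp (gen_minus :: complex^'n^'n) = mat 1 - 2 *\<^sub>R (mat 1 - com_proj)"
  using mexp_scaled_idempotent_reflection[OF com_proj_complement_idempotent exp_pi_i']
  by (simp add: gen_minus_def mult.assoc)

lemma mexp_gen_parity: "mexp (gen_parity :: complex^'n^'n) = (-1) *\<^sub>R mat 1"
proof -
  have "exp (- \<i> * pi) = -1"
    by (simp add: exp_minus)
  from mexp_scaled_idempotent_reflection[OF matrix_mul_lid this] show ?thesis
    by (simp add: gen_parity_def mult.assoc scaleR_2)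
qed

lemma mexp_double_gen_plus: "mexp ((gen_plus :: complex^'n^'n) + gen_plus) = mat 1"
proof -
  have "(gen_plus :: complex^'n^'n) + gen_plus
      = (\<chi> i j. (2 * of_real pi * \<i>) * com_proj$i$j)"
    by (simp add: gen_plus_def vec_eq_iff algebra_simps)
  then show ?thesis
    by (simp only: mexp_scaled_idempotent_eq_1[OF com_proj_idempotent exp_two_pi_i])
qed

lemma mexp_double_gen_minus: "mexp ((gen_minus :: complex^'n^'n) + gen_minus) = mat 1"
proof -
  have "(gen_minus :: complex^'n^'n) + gen_minus
      = (\<chi> i j. (2 * of_real pi * \<i>) * (mat 1 - com_proj)$i$j)"
    by (simp add: gen_minus_def vec_eq_iff algebra_simps)
  then show ?thesis
    by (simp only: mexp_scaled_idempotent_eq_1[OF com_proj_complement_idempotent exp_two_pi_i])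
qed

lemma mexp_gen_minus_eq_parity_mult:
  "mexp (gen_minus :: complex^'n^'n) = mexp gen_parity ** mexp gen_plus"
proof -
  have "mexp gen_parity ** mexp gen_plus
      = (-1) *\<^sub>R (mat 1 - 2 *\<^sub>R com_proj :: complex^'n^'n)"
    unfolding mexp_gen_parity mexp_gen_plus scalar_matrix_assoc[symmetric] by simp
  then show ?thesis
    by (simp add: mexp_gen_minus vec_eq_iff mat_def scaleR_conv_of_real algebra_simps)
qed

theorem proposition2:
  assumes "CARD('n::finite) \<ge> 2"
  shows "unitary_mat (mexp (gen_plus :: complex^'n^'n))
       \<and> unitary_mat (mexp (gen_minus :: complex^'n^'n))
       \<and> mexp (gen_minus :: complex^'n^'n) = mexp gen_parity ** mexp gen_plus
       \<and> mexp ((gen_plus :: complex^'n^'n) + gen_plus) = mat 1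
       \<and> mexp ((gen_minus :: complex^'n^'n) + gen_minus) = mat 1
       \<and> (\<forall>m m'. mexp (gen_plus :: complex^'n^'n) $ m $ m' =
             (if m = m' then 1 - 2 / of_nat CARD('n) else - 2 / of_nat CARD('n)))
       \<and> (\<forall>m m'. mexp (gen_minus :: complex^'n^'n) $ m $ m' =
             (if m = m' then - (1 - 2 / of_nat CARD('n)) else 2 / of_nat CARD('n)))"
proof -
  have "mexp (gen_plus :: complex^'n^'n) $ m $ m' =
      (if m = m' then 1 - 2 / of_nat CARD('n) else - 2 / of_nat CARD('n))"
    "mexp (gen_minus :: complex^'n^'n) $ m $ m' =
      (if m = m' then - (1 - 2 / of_nat CARD('n)) else 2 / of_nat CARD('n))" for m m'
    by (simp_all add: mexp_gen_plus mexp_gen_minus com_proj_def mat_def scaleR_conv_of_real)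
  moreover have "unitary_mat (mexp (gen_plus :: complex^'n^'n))"
    unfolding mexp_gen_plus
    by (rule unitary_mat_reflection[OF com_proj_idempotent adjoint_com_proj])
  moreover have "unitary_mat (mexp (gen_minus :: complex^'n^'n))"
    unfolding mexp_gen_minus
    by (rule unitary_mat_reflection[OF com_proj_complement_idempotent adjoint_com_proj_complement])
  ultimately show ?thesis
    using mexp_gen_minus_eq_parity_mult mexp_double_gen_plus mexp_double_gen_minus by blast
qed

end
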